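(* Let $\beta,\sigma,\kappa,\gamma,\delta$ be parameters with $\beta,\sigma,\kappa\ge 0$, $\gamma>0$, $\kappa+\sigma>0$, $\delta>0$, and let $0\le q\le 1$. Consider the system \begin{align*} \dot{A}(t)&=q\beta \big(1-A(t)-I(t)-R(t)\big)\big(A(t)+I(t)\big)-\sigma A(t)-\kappa A(t),\\ \dot{I}(t)&=(1-q)\beta \big(1-A(t)-I(t)-R(t)\big)\big(A(t)+I(t)\big) +\sigma A(t)-\gamma I(t),\\ \dot{R}(t)&=\kappa A(t)+\gamma I(t) - \delta R(t), \end{align*} with $S(t)=1-A(t)-I(t)-R(t)$. If $$R_{0}:= \max\left( \frac{\beta}{\kappa+\gamma+\sigma},\ \frac{\beta\big(q\gamma+(1-q)\kappa+\sigma\big)}{\gamma(\kappa+\sigma)} \right) <1,$$ then the disease-free equilibrium $(S,A,I,R)=(1,0,0,0)$ is globally asymptotically stable.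
   Context: This is the single-group SAIR(S) model obtained from $\dot S=-\beta S(A+I)+\delta R$, $\dot A=q\beta S(A+I)-\sigma A-\kappa A$, $\dot I=(1-q)\beta S(A+I)+\sigma A-\gamma I$, $\dot R=\kappa A+\gamma I-\delta R$ by eliminating $S=1-A-I-R$. Here $S,A,I,R$ are the proportions of susceptible, asymptomatic-infected, symptomatic-infected and recovered individuals (so states lie in $A,I,R\ge 0$, $A+I+R\le 1$); $\beta$ is the transmission rate, $\sigma$ the asymptomatic-to-symptomatic progression rate, $\kappa,\gamma$ the recovery rates of asymptomatic and symptomatic infected, $\delta$ the rate at which immunity recedes, and $q$ the proportion of new infections that are asymptomatic. *)

theory Defs
  imports "HOL-Analysis.Analysis"
begin

definition sair_R0 :: "real \<Rightarrow> real \<Rightarrow> real \<Rightarrow> real \<Rightarrow> real \<Rightarrow> real" where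
  "sair_R0 \<beta> \<sigma> \<kappa> \<gamma> q =
     max (\<beta> / (\<kappa> + \<gamma> + \<sigma>)) (\<beta> * (q * \<gamma> + (1 - q) * \<kappa> + \<sigma>) / (\<gamma> * (\<kappa> + \<sigma>)))"

definition sair_Omega :: "(real \<times> real \<times> real) set" where
  "sair_Omega = {(a, i, r). a \<ge> 0 \<and> i \<ge> 0 \<and> r \<ge> 0 \<and> a + i + r \<le> 1}"

definition sair_solution ::
  "real \<Rightarrow> real \<Rightarrow> real \<Rightarrow> real \<Rightarrow> real \<Rightarrow> real \<Rightarrow>
   (real \<Rightarrow> real) \<Rightarrow> (real \<Rightarrow> real) \<Rightarrow> (real \<Rightarrow> real) \<Rightarrow> bool" where
  "sair_solution \<beta> \<sigma> \<kappa> \<gamma> \<delta> q A I R \<longleftrightarrow>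
     (\<forall>t\<ge>0.
        (A has_real_derivative
           (q * \<beta> * (1 - A t - I t - R t) * (A t + I t) - \<sigma> * A t - \<kappa> * A t)) (at t within {0..}) \<and>
        (I has_real_derivative
           ((1 - q) * \<beta> * (1 - A t - I t - R t) * (A t + I t) + \<sigma> * A t - \<gamma> * I t)) (at t within {0..}) \<and>
        (R has_real_derivative
           (\<kappa> * A t + \<gamma> * I t - \<delta> * R t)) (at t within {0..}))"

end

theory Submission
  imports Defs "HOL-Real_Asymp.Real_Asymp"
begin

(* Invariance of the state space: the vector field is quasi-positive.  On bounded sets each of
   A, I, R and S = 1 - A - I - R satisfies x' + L x >= -C N at every time at which all four are
   >= -N.  On a time interval of length h with C h < 1, an integrating factor shows that the
   largest negative part M of the four is at most C h M, hence zero; stepping along [0, t] gives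
   invariance for all times.
   Exponential decay: on the state space the bilinear infection term only lowers the weighted sum
   v1 A + v2 I + v3 R, so it suffices that the linearisation J at the disease-free equilibrium,
   a block lower-triangular Metzler matrix, has a positive left vector v with v J <= -mu v.  This
   holds because R0 < 1 says exactly that the 2x2 (A, I)-block has negative trace and positive
   determinant.  The weighted sum then decays like exp (-mu t), which gives both stability and
   global attractivity. *)

lemma integrating_factor_lower_bound:
  fixes f f' :: "real \<Rightarrow> real"
  assumes "a \<le> t" "L \<ge> 0" "B \<ge> 0"
    and der: "\<And>s. s \<in> {a..t} \<Longrightarrow> (f has_real_derivative f' s) (at s within {a..t})"
    and ineq: "\<And>s. s \<in> {a..t} \<Longrightarrow> f' s + L * f s \<ge> -B"
  shows "f t \<ge> exp (- L * (t - a)) * f a - B * (t - a)"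
proof -
  define E where "E s = exp (L * (s - a))" for s
  define g where "g s = E s * f s + B * E t * (s - a)" for s
  define g' where "g' s = E s * (f' s + L * f s) + B * E t" for s
  have "(g has_real_derivative g' s) (at s within {a..t})" if "s \<in> {a..t}" for s
    unfolding g_def g'_def E_def
    by (auto intro!: derivative_eq_intros der that simp: algebra_simps)
  then obtain x where x: "x \<in> {a..t}" "g t - g a = g' x * (t - a)"
    using mvt_very_simple[OF \<open>a \<le> t\<close>, of g "\<lambda>s. (*) (g' s)"]
    by (auto simp: has_field_derivative_def)
  have "E x * (f' x + L * f x) \<ge> E x * (- B)"
    using ineq[OF x(1)] by (intro mult_left_mono) (auto simp: E_def)
  moreover have "E x * B \<le> E t * B"
    using x(1) \<open>L \<ge> 0\<close> \<open>B \<ge> 0\<close> by (intro mult_right_mono) (auto simp: E_def mult_left_mono)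
  ultimately have "g' x \<ge> 0"
    by (simp add: g'_def mult.commute)
  then have "g' x * (t - a) \<ge> 0"
    using \<open>a \<le> t\<close> by simp
  then have "g a \<le> g t"
    using x(2) by linarith
  then have "f a \<le> E t * (f t + B * (t - a))"
    by (simp add: g_def E_def distrib_left mult.assoc mult.left_commute)
  then have "exp (- L * (t - a)) * f a \<le> exp (- L * (t - a)) * (E t * (f t + B * (t - a)))"
    by (rule mult_left_mono) simp
  also have "\<dots> = f t + B * (t - a)"
    by (simp add: E_def mult.assoc[symmetric] exp_add[symmetric])
  finally show ?thesis by simp
qed

lemma quasi_positive_nonneg_on_short_interval:
  fixes f f' :: "'i \<Rightarrow> real \<Rightarrow> real"
  assumes "a \<le> b" "L \<ge> 0" "C \<ge> 0" "C * (b - a) < 1"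
    and der: "\<And>i s. i \<in> F \<Longrightarrow> s \<in> {a..b} \<Longrightarrow> (f i has_real_derivative f' i s) (at s within {a..b})"
    and quasi_pos: "\<And>s N. s \<in> {a..b} \<Longrightarrow> N \<ge> 0 \<Longrightarrow> \<forall>j\<in>F. f j s \<ge> -N \<Longrightarrow>
                      \<forall>i\<in>F. f' i s + L * f i s \<ge> -(C * N)"
    and lower: "\<And>i s. i \<in> F \<Longrightarrow> s \<in> {a..b} \<Longrightarrow> f i s \<ge> -K"
    and init: "\<And>i. i \<in> F \<Longrightarrow> f i a \<ge> 0"
    and "i \<in> F" "s \<in> {a..b}"
  shows "f i s \<ge> 0"
proof -
  define Neg where "Neg = insert 0 ((\<lambda>(j, s). - f j s) ` (F \<times> {a..b}))"
  define M where "M = Sup Neg"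
  have bdd: "bdd_above Neg"
    unfolding Neg_def by (rule bdd_aboveI[of _ "max 0 K"]) (auto dest: lower)
  have "0 \<le> M"
    unfolding M_def by (intro cSup_upper bdd) (simp add: Neg_def)
  have below: "f j s \<ge> -M" if "j \<in> F" "s \<in> {a..b}" for j s
  proof -
    have "- f j s \<in> Neg"
      unfolding Neg_def using that by (intro insertI2 rev_image_eqI[of "(j, s)"]) auto
    from cSup_upper[OF this bdd] show ?thesis
      by (simp add: M_def)
  qed
  have shrink: "- f j s \<le> C * (b - a) * M" if "j \<in> F" "s \<in> {a..b}" for j s
  proof -
    have "f j s \<ge> exp (- L * (s - a)) * f j a - C * M * (s - a)"
    proof (rule integrating_factor_lower_bound)
      show "a \<le> s" "L \<ge> 0" "C * M \<ge> 0"
        using that \<open>L \<ge> 0\<close> \<open>C \<ge> 0\<close> \<open>0 \<le> M\<close> by auto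
      fix u assume u: "u \<in> {a..s}"
      then have "u \<in> {a..b}"
        using that by auto
      then show "(f j has_real_derivative f' j u) (at u within {a..s})"
        using has_field_derivative_subset[OF der[OF \<open>j \<in> F\<close>], of u "{a..s}"] that by auto
      have "\<forall>i\<in>F. f' i u + L * f i u \<ge> - (C * M)"
        using \<open>u \<in> {a..b}\<close> \<open>0 \<le> M\<close> below by (intro quasi_pos) auto
      then show "f' j u + L * f j u \<ge> - (C * M)"
        using \<open>j \<in> F\<close> by blast
    qed
    moreover have "exp (- L * (s - a)) * f j a \<ge> 0"
      using init[OF \<open>j \<in> F\<close>] by simp
    moreover have "C * M * (s - a) \<le> C * (b - a) * M"
      using that \<open>C \<ge> 0\<close> \<open>0 \<le> M\<close> by (simp add: mult.commute mult.left_commute mult_left_mono)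
    ultimately show ?thesis
      by linarith
  qed
  have "C * (b - a) * M \<ge> 0"
    using \<open>a \<le> b\<close> \<open>C \<ge> 0\<close> \<open>0 \<le> M\<close> by simp
  then have "Sup Neg \<le> C * (b - a) * M"
    unfolding Neg_def using shrink by (intro cSup_least) auto
  then have "M \<le> C * (b - a) * M"
    by (simp add: M_def)
  then have "(1 - C * (b - a)) * M \<le> 0"
    by (simp add: algebra_simps)
  then have "M = 0"
    using \<open>0 \<le> M\<close> \<open>C * (b - a) < 1\<close> by (simp add: mult_le_0_iff)
  then show ?thesis
    using below[OF \<open>i \<in> F\<close> \<open>s \<in> {a..b}\<close>] by simp
qed

lemma quasi_positive_nonneg_on_interval:
  fixes f f' :: "'i \<Rightarrow> real \<Rightarrow> real"
  assumes "L \<ge> 0" "C \<ge> 0"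
    and der: "\<And>i s. i \<in> F \<Longrightarrow> s \<in> {a..b} \<Longrightarrow> (f i has_real_derivative f' i s) (at s within {a..b})"
    and quasi_pos: "\<And>s N. s \<in> {a..b} \<Longrightarrow> N \<ge> 0 \<Longrightarrow> \<forall>j\<in>F. f j s \<ge> -N \<Longrightarrow>
                      \<forall>i\<in>F. f' i s + L * f i s \<ge> -(C * N)"
    and lower: "\<And>i s. i \<in> F \<Longrightarrow> s \<in> {a..b} \<Longrightarrow> f i s \<ge> -K"
    and init: "\<And>i. i \<in> F \<Longrightarrow> f i a \<ge> 0"
    and "i \<in> F" "s \<in> {a..b}"
  shows "f i s \<ge> 0"
proof -
  define h where "h = 1 / (C + 1)"
  have "h > 0" "C * h < 1"
    using \<open>C \<ge> 0\<close> by (simp_all add: h_def field_simps)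
  have steps: "\<forall>j\<in>F. \<forall>s\<in>{a..b}. s \<le> a + real n * h \<longrightarrow> f j s \<ge> 0" for n
  proof (induction n)
    case 0
    then show ?case
      using init by auto
  next
    case (Suc n)
    show ?case
    proof (intro ballI impI)
      fix j s
      assume "j \<in> F" "s \<in> {a..b}" "s \<le> a + real (Suc n) * h"
      define c where "c = a + real n * h"
      show "f j s \<ge> 0"
      proof (cases "s \<le> c")
        case True
        then show ?thesis
          using Suc.IH \<open>j \<in> F\<close> \<open>s \<in> {a..b}\<close> by (simp add: c_def)
      next
        case False
        have "{c..s} \<subseteq> {a..b}"
          using \<open>h > 0\<close> \<open>s \<in> {a..b}\<close> by (auto simp: c_def)
        have "C * (s - c) \<le> C * h"
          using \<open>s \<le> a + real (Suc n) * h\<close> \<open>C \<ge> 0\<close> by (intro mult_left_mono) (auto simp: c_def algebra_simps)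
        show ?thesis
        proof (rule quasi_positive_nonneg_on_short_interval[where f = f and f' = f' and F = F and a = c
              and b = s and L = L and C = C and K = K])
          show "C * (s - c) < 1"
            using \<open>C * (s - c) \<le> C * h\<close> \<open>C * h < 1\<close> by linarith
          show "(f i has_real_derivative f' i u) (at u within {c..s})" if "i \<in> F" "u \<in> {c..s}" for i u
            using has_field_derivative_subset[OF der \<open>{c..s} \<subseteq> {a..b}\<close>] that \<open>{c..s} \<subseteq> {a..b}\<close> by blast
          show "f i c \<ge> 0" if "i \<in> F" for i
            using Suc.IH that \<open>{c..s} \<subseteq> {a..b}\<close> False by (auto simp: c_def)
        qed (use False \<open>L \<ge> 0\<close> \<open>C \<ge> 0\<close> \<open>j \<in> F\<close> quasi_pos lower \<open>{c..s} \<subseteq> {a..b}\<close> in auto)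
      qed
    qed
  qed
  obtain n where "b \<le> a + real n * h"
    using real_arch_simple[of "(b - a) / h"] \<open>h > 0\<close> by (auto simp: field_simps)
  then show ?thesis
    using steps[of n] \<open>i \<in> F\<close> \<open>s \<in> {a..b}\<close> by auto
qed

lemma quasi_positive_nonneg:
  fixes f f' :: "'i \<Rightarrow> real \<Rightarrow> real"
  assumes "finite F"
    and der: "\<And>i s. i \<in> F \<Longrightarrow> s \<ge> 0 \<Longrightarrow> (f i has_real_derivative f' i s) (at s within {0..})"
    and quasi_pos: "\<And>K. K \<ge> 0 \<Longrightarrow> \<exists>L\<ge>0. \<exists>C\<ge>0. \<forall>s\<ge>0. \<forall>N\<ge>0.
                      (\<forall>j\<in>F. \<bar>f j s\<bar> \<le> K \<and> f j s \<ge> -N) \<longrightarrow> (\<forall>i\<in>F. f' i s + L * f i s \<ge> -(C * N))"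
    and init: "\<And>i. i \<in> F \<Longrightarrow> f i 0 \<ge> 0"
    and "i \<in> F" "t \<ge> 0"
  shows "f i t \<ge> 0"
proof -
  have der_on: "(f j has_real_derivative f' j s) (at s within {0..t})" if "j \<in> F" "s \<in> {0..t}" for j s
    using der[of j s] that by (auto intro: has_field_derivative_subset)
  have "compact (\<Union>j\<in>F. f j ` {0..t})"
    using \<open>finite F\<close> der_on by (intro compact_UN compact_continuous_image DERIV_continuous_on) auto
  then obtain K where "K > 0" and K: "\<And>j s. j \<in> F \<Longrightarrow> s \<in> {0..t} \<Longrightarrow> \<bar>f j s\<bar> \<le> K"
    by (fastforce dest: compact_imp_bounded simp: bounded_pos)
  obtain L C where "L \<ge> 0" "C \<ge> 0" and LC: "\<forall>s\<ge>0. \<forall>N\<ge>0.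
      (\<forall>j\<in>F. \<bar>f j s\<bar> \<le> K \<and> f j s \<ge> -N) \<longrightarrow> (\<forall>i\<in>F. f' i s + L * f i s \<ge> -(C * N))"
    using quasi_pos[of K] \<open>K > 0\<close> by auto
  show ?thesis
  proof (rule quasi_positive_nonneg_on_interval[where f = f and f' = f' and F = F and a = 0 and b = t
        and L = L and C = C and K = K])
    show "\<forall>i\<in>F. f' i s + L * f i s \<ge> - (C * N)"
      if "s \<in> {0..t}" "N \<ge> 0" "\<forall>j\<in>F. f j s \<ge> - N" for s N
      using LC K that by auto
    show "f j s \<ge> -K" if "j \<in> F" "s \<in> {0..t}" for j s
      using K[OF that] by linarith
  qed (use \<open>L \<ge> 0\<close> \<open>C \<ge> 0\<close> der_on init \<open>i \<in> F\<close> \<open>t \<ge> 0\<close> in auto)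
qed

lemma mult_ge_neg_bound:
  fixes x y M N X Y :: real
  assumes "x \<ge> -M" "y \<ge> -N" "\<bar>x\<bar> \<le> X" "\<bar>y\<bar> \<le> Y" "M \<ge> 0" "N \<ge> 0"
  shows "x * y \<ge> -(M * Y + N * X)"
proof -
  have "x * y \<ge> - (N * X)" if "x \<ge> 0" "y \<le> 0"
  proof -
    have "x * y \<ge> X * y"
      using that assms by (intro mult_right_mono_neg) auto
    moreover have "X * y \<ge> X * (- N)"
      using that assms by (intro mult_left_mono) auto
    ultimately show ?thesis
      using mult.commute[of N X] by linarith
  qed
  moreover have "x * y \<ge> - (M * Y)" if "x \<le> 0" "y \<ge> 0"
  proof -
    have "x * y \<ge> x * Y"
      using that assms by (intro mult_left_mono_neg) auto
    moreover have "x * Y \<ge> (- M) * Y"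
      using that assms by (intro mult_right_mono) auto
    ultimately show ?thesis by simp
  qed
  moreover have "M * Y \<ge> 0" "N * X \<ge> 0"
    using assms by auto
  ultimately show ?thesis
    by (smt (verit) mult_nonneg_nonneg mult_nonpos_nonpos)
qed

lemma scaled_lower_bound:
  fixes b c x P :: real
  assumes "0 \<le> c" "c \<le> b" "x \<ge> -P" "P \<ge> 0"
  shows "c * x \<ge> -(b * P)"
proof -
  have "c * x \<ge> c * (-P)"
    using assms by (intro mult_left_mono) auto
  moreover have "c * P \<le> b * P"
    using assms by (intro mult_right_mono) auto
  ultimately show ?thesis by simp
qed

lemma Metzler_Hurwitz_2x2_positive_left_vector:
  fixes a b c d :: real
  assumes "b \<ge> 0" "c \<ge> 0" "d < 0" "a * d - b * c > 0"
  obtains v1 v2 where "v1 > 0" "v2 > 0" "v1 * a + v2 * c < 0" "v1 * b + v2 * d < 0"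
proof
  \<comment> \<open>(-d, b) is orthogonal to the second column and has product -det with the first one;
    increasing its second entry slightly makes both products negative\<close>
  define D where "D = a * d - b * c"
  have "D > 0" "c + 1 > 0"
    using assms by (simp_all add: D_def)
  show "- d > 0"
    using assms by simp
  show "b + D / (c + 1) > 0"
    using \<open>b \<ge> 0\<close> \<open>D > 0\<close> \<open>c + 1 > 0\<close> by (simp add: add_nonneg_pos)
  have "- d * a + (b + D / (c + 1)) * c = - D / (c + 1)"
    using \<open>c + 1 > 0\<close> by (simp add: D_def field_simps)
  then show "- d * a + (b + D / (c + 1)) * c < 0"
    using \<open>D > 0\<close> \<open>c + 1 > 0\<close> by (simp add: divide_neg_pos)
  have "- d * b + (b + D / (c + 1)) * d = D / (c + 1) * d"
    by (simp add: algebra_simps)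
  then show "- d * b + (b + D / (c + 1)) * d < 0"
    using \<open>D > 0\<close> \<open>c + 1 > 0\<close> \<open>d < 0\<close> by (simp add: mult_pos_neg divide_neg_pos)
qed

lemma Metzler_Hurwitz_block_triangular_Lyapunov_weights:
  fixes a b c d k g \<delta> :: real
  assumes "b \<ge> 0" "c \<ge> 0" "d < 0" "a * d - b * c > 0" "k \<ge> 0" "g \<ge> 0" "\<delta> > 0"
  obtains v1 v2 v3 \<mu> where "v1 > 0" "v2 > 0" "v3 > 0" "\<mu> > 0"
    "v1 * a + v2 * c + v3 * k \<le> - \<mu> * v1"
    "v1 * b + v2 * d + v3 * g \<le> - \<mu> * v2"
    "v3 * \<delta> \<ge> \<mu> * v3"
proof -
  obtain u1 u2 where "u1 > 0" "u2 > 0" and neg: "u1 * a + u2 * c < 0" "u1 * b + u2 * d < 0"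
    using Metzler_Hurwitz_2x2_positive_left_vector[OF assms(1-4)] by blast
  define m where "m = min (- (u1 * a + u2 * c)) (- (u1 * b + u2 * d))"
  define s where "s = (k + g + 1) / m"
  define \<mu> where "\<mu> = min (min (1 / (s * u1)) (1 / (s * u2))) \<delta>"
  have "m > 0" "s > 0"
    using neg assms by (simp_all add: m_def s_def)
  then have "\<mu> > 0"
    using \<open>u1 > 0\<close> \<open>u2 > 0\<close> \<open>\<delta> > 0\<close> by (simp add: \<mu>_def)
  have "s * m = k + g + 1"
    using \<open>m > 0\<close> by (simp add: s_def)
  have "u1 * a + u2 * c \<le> - m" "u1 * b + u2 * d \<le> - m"
    by (simp_all add: m_def)
  then have "s * (u1 * a + u2 * c) \<le> s * (- m)" "s * (u1 * b + u2 * d) \<le> s * (- m)"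
    using \<open>s > 0\<close> by (metis less_imp_le mult_left_mono)+
  then have "(s * u1) * a + (s * u2) * c + 1 * k \<le> -1" "(s * u1) * b + (s * u2) * d + 1 * g \<le> -1"
    using \<open>s * m = k + g + 1\<close> assms by (simp_all add: algebra_simps)
  moreover have "\<mu> \<le> 1 / (s * u1)" "\<mu> \<le> 1 / (s * u2)"
    by (simp_all add: \<mu>_def)
  then have "\<mu> * (s * u1) \<le> 1" "\<mu> * (s * u2) \<le> 1"
    using \<open>s > 0\<close> \<open>u1 > 0\<close> \<open>u2 > 0\<close> by (simp_all add: pos_le_divide_eq)
  moreover have "1 * \<delta> \<ge> \<mu> * 1"
    by (simp add: \<mu>_def)
  ultimately show ?thesis
    using that[of "s * u1" "s * u2" 1 \<mu>] \<open>s > 0\<close> \<open>u1 > 0\<close> \<open>u2 > 0\<close> \<open>\<mu> > 0\<close> by simp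
qed

lemma norm_triple_le_sum:
  fixes x y z :: real
  shows "norm (x, y, z) \<le> \<bar>x\<bar> + \<bar>y\<bar> + \<bar>z\<bar>"
  using norm_Pair_le[of x "(y, z)"] norm_Pair_le[of y z] by simp

lemma abs_le_norm_triple:
  fixes x y z :: real
  shows "\<bar>x\<bar> \<le> norm (x, y, z)" "\<bar>y\<bar> \<le> norm (x, y, z)" "\<bar>z\<bar> \<le> norm (x, y, z)"
  using norm_fst_le[of x "(y, z)"] norm_snd_le[of "(y, z)" x] norm_fst_le[of y z] norm_snd_le[of z y]
  by auto

lemma tendsto_zero_if_exponential_bound:
  fixes x :: "real \<Rightarrow> 'a::real_normed_vector"
  assumes "\<mu> > 0" and bound: "\<And>t. t \<ge> 0 \<Longrightarrow> norm (x t) \<le> c * exp (- \<mu> * t)"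
  shows "(x \<longlongrightarrow> 0) at_top"
proof (rule Lim_null_comparison)
  show "eventually (\<lambda>t. norm (x t) \<le> c * exp (- \<mu> * t)) at_top"
    using eventually_ge_at_top[of 0] by (rule eventually_mono) (rule bound)
  show "((\<lambda>t. c * exp (- \<mu> * t)) \<longlongrightarrow> 0) at_top"
    using \<open>\<mu> > 0\<close> by real_asymp
qed

locale sair =
  fixes \<beta> \<sigma> \<kappa> \<gamma> \<delta> q :: real
  assumes beta_nonneg: "\<beta> \<ge> 0" and sigma_nonneg: "\<sigma> \<ge> 0" and kappa_nonneg: "\<kappa> \<ge> 0"
    and gamma_nonneg: "\<gamma> \<ge> 0" and delta_nonneg: "\<delta> \<ge> 0" and q_nonneg: "0 \<le> q" and q_le_1: "q \<le> 1"
begin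

definition rhs_A :: "real \<Rightarrow> real \<Rightarrow> real \<Rightarrow> real" where
  "rhs_A x y z = q * \<beta> * (1 - x - y - z) * (x + y) - \<sigma> * x - \<kappa> * x"

definition rhs_I :: "real \<Rightarrow> real \<Rightarrow> real \<Rightarrow> real" where
  "rhs_I x y z = (1 - q) * \<beta> * (1 - x - y - z) * (x + y) + \<sigma> * x - \<gamma> * y"

definition rhs_R :: "real \<Rightarrow> real \<Rightarrow> real \<Rightarrow> real" where
  "rhs_R x y z = \<kappa> * x + \<gamma> * y - \<delta> * z"

lemma solution_has_derivatives:
  assumes "sair_solution \<beta> \<sigma> \<kappa> \<gamma> \<delta> q A I R" "t \<ge> 0"
  shows "(A has_real_derivative rhs_A (A t) (I t) (R t)) (at t within {0..})"
    and "(I has_real_derivative rhs_I (A t) (I t) (R t)) (at t within {0..})"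
    and "(R has_real_derivative rhs_R (A t) (I t) (R t)) (at t within {0..})"
  using assms unfolding sair_solution_def rhs_A_def rhs_I_def rhs_R_def by auto

lemma infection_term_lower_bound:
  fixes x y z K N p :: real
  assumes bounds: "\<bar>x\<bar> \<le> K" "\<bar>y\<bar> \<le> K" "\<bar>1 - x - y - z\<bar> \<le> K"
    and lower: "x \<ge> -N" "y \<ge> -N" "1 - x - y - z \<ge> -N"
    and "N \<ge> 0" "0 \<le> p" "p \<le> 1"
  shows "p * \<beta> * ((1 - x - y - z) * (x + y)) \<ge> -(\<beta> * (4 * K * N))"
proof (rule scaled_lower_bound)
  have "1 - x - y - z \<ge> -N" "\<bar>1 - x - y - z\<bar> \<le> K" "x + y \<ge> -(2 * N)" "\<bar>x + y\<bar> \<le> 2 * K"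
    using bounds lower by auto
  from mult_ge_neg_bound[OF this(1,3,2,4)] \<open>N \<ge> 0\<close>
  show "(1 - x - y - z) * (x + y) \<ge> -(4 * K * N)"
    by (simp add: algebra_simps)
  show "0 \<le> 4 * K * N"
    using bounds(1) \<open>N \<ge> 0\<close> by simp
  show "0 \<le> p * \<beta>" "p * \<beta> \<le> \<beta>"
    using \<open>0 \<le> p\<close> \<open>p \<le> 1\<close> beta_nonneg by (simp_all add: mult_left_le_one_le)
qed

lemma rhs_quasi_positive:
  fixes x y z K N :: real
  defines "L \<equiv> \<sigma> + \<kappa> + \<gamma> + \<delta> + 2 * \<beta> * K"
  defines "C \<equiv> 4 * \<beta> * K + \<sigma> + \<kappa> + \<gamma> + \<delta> + 2 * L"
  assumes bounds: "\<bar>x\<bar> \<le> K" "\<bar>y\<bar> \<le> K" "\<bar>1 - x - y - z\<bar> \<le> K"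
    and lower: "x \<ge> -N" "y \<ge> -N" "z \<ge> -N" "1 - x - y - z \<ge> -N"
    and "N \<ge> 0"
  shows "rhs_A x y z + L * x \<ge> -(C * N)"
    and "rhs_I x y z + L * y \<ge> -(C * N)"
    and "rhs_R x y z + L * z \<ge> -(C * N)"
    and "-(rhs_A x y z + rhs_I x y z + rhs_R x y z) + L * (1 - x - y - z) \<ge> -(C * N)"
proof -
  define w u where "w = 1 - x - y - z" and "u = x + y"
  note params = beta_nonneg sigma_nonneg kappa_nonneg gamma_nonneg delta_nonneg
  have "K \<ge> 0"
    using bounds(1) by linarith
  have "L \<ge> \<sigma> + \<kappa>" "L \<ge> \<gamma>" "L \<ge> \<delta>" "L \<ge> 2 * \<beta> * K"
    using \<open>K \<ge> 0\<close> params by (auto simp: L_def)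
  have infection: "q * \<beta> * (w * u) \<ge> -(\<beta> * (4 * K * N))" "(1 - q) * \<beta> * (w * u) \<ge> -(\<beta> * (4 * K * N))"
    using infection_term_lower_bound[OF bounds lower(1,2,4) \<open>N \<ge> 0\<close>] q_nonneg q_le_1
    by (simp_all add: w_def u_def)
  have "\<sigma> * x \<ge> -(\<sigma> * N)" "\<kappa> * x \<ge> -(\<kappa> * N)" "\<gamma> * y \<ge> -(\<gamma> * N)" "\<delta> * z \<ge> -(\<delta> * N)"
    "(L - \<sigma> - \<kappa>) * x \<ge> -(L * N)" "(L - \<gamma>) * y \<ge> -(L * N)" "(L - \<delta>) * z \<ge> -(L * N)"
    using lower \<open>N \<ge> 0\<close> \<open>L \<ge> \<sigma> + \<kappa>\<close> \<open>L \<ge> \<gamma>\<close> \<open>L \<ge> \<delta>\<close> params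
    by (auto intro!: scaled_lower_bound)
  moreover have "(L - \<beta> * u) * w \<ge> -((2 * L) * N)"
  proof (rule scaled_lower_bound)
    have "\<bar>\<beta> * u\<bar> \<le> \<beta> * (2 * K)"
      using bounds beta_nonneg by (auto simp: u_def abs_mult intro!: mult_left_mono)
    then show "0 \<le> L - \<beta> * u" "L - \<beta> * u \<le> 2 * L"
      using \<open>L \<ge> 2 * \<beta> * K\<close> by auto
  qed (use lower \<open>N \<ge> 0\<close> w_def in auto)
  moreover have "rhs_A x y z + L * x = q * \<beta> * (w * u) + (L - \<sigma> - \<kappa>) * x"
    "rhs_I x y z + L * y = (1 - q) * \<beta> * (w * u) + \<sigma> * x + (L - \<gamma>) * y"
    "rhs_R x y z + L * z = \<kappa> * x + \<gamma> * y + (L - \<delta>) * z"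
    "-(rhs_A x y z + rhs_I x y z + rhs_R x y z) + L * w = (L - \<beta> * u) * w + \<delta> * z"
    by (simp_all add: rhs_A_def rhs_I_def rhs_R_def w_def u_def algebra_simps)
  moreover have "C * N = \<beta> * (4 * K * N) + \<sigma> * N + \<kappa> * N + \<gamma> * N + \<delta> * N + 2 * (L * N)"
    by (simp add: C_def algebra_simps)
  moreover have "\<beta> * (4 * K * N) \<ge> 0" "\<sigma> * N \<ge> 0" "\<kappa> * N \<ge> 0" "\<gamma> * N \<ge> 0" "\<delta> * N \<ge> 0"
    "L * N \<ge> 0"
    using \<open>K \<ge> 0\<close> \<open>N \<ge> 0\<close> \<open>L \<ge> \<delta>\<close> params by auto
  ultimately show "rhs_A x y z + L * x \<ge> -(C * N)"
    and "rhs_I x y z + L * y \<ge> -(C * N)"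
    and "rhs_R x y z + L * z \<ge> -(C * N)"
    and "-(rhs_A x y z + rhs_I x y z + rhs_R x y z) + L * (1 - x - y - z) \<ge> -(C * N)"
    using infection unfolding w_def[symmetric] by linarith+
qed

lemma solution_stays_in_Omega:
  assumes sol: "sair_solution \<beta> \<sigma> \<kappa> \<gamma> \<delta> q A I R"
    and init: "(A 0, I 0, R 0) \<in> sair_Omega" and "t \<ge> 0"
  shows "(A t, I t, R t) \<in> sair_Omega"
proof -
  define f where "f = (!) [A, I, R, \<lambda>s. 1 - A s - I s - R s]"
  define f' where "f' = (!) [\<lambda>s. rhs_A (A s) (I s) (R s), \<lambda>s. rhs_I (A s) (I s) (R s),
    \<lambda>s. rhs_R (A s) (I s) (R s), \<lambda>s. - (rhs_A (A s) (I s) (R s) + rhs_I (A s) (I s) (R s) + rhs_R (A s) (I s) (R s))]"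
  have "f j t \<ge> 0" if "j \<in> {0, 1, 2, 3}" for j
  proof (rule quasi_positive_nonneg[where f = f and f' = f' and F = "{0, 1, 2, 3}"])
    show "(f j has_real_derivative f' j s) (at s within {0..})" if "j \<in> {0, 1, 2, 3}" "s \<ge> 0" for j s
      using that solution_has_derivatives[OF sol \<open>s \<ge> 0\<close>]
      by (auto simp: f_def f'_def intro!: derivative_eq_intros)
    show "\<exists>L\<ge>0. \<exists>C\<ge>0. \<forall>s\<ge>0. \<forall>N\<ge>0. (\<forall>j\<in>{0, 1, 2, 3}. \<bar>f j s\<bar> \<le> K \<and> f j s \<ge> -N) \<longrightarrow>
        (\<forall>i\<in>{0, 1, 2, 3}. f' i s + L * f i s \<ge> -(C * N))" if "K \<ge> 0" for K
    proof -
      define L where "L = \<sigma> + \<kappa> + \<gamma> + \<delta> + 2 * \<beta> * K"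
      define C where "C = 4 * \<beta> * K + \<sigma> + \<kappa> + \<gamma> + \<delta> + 2 * L"
      have "L \<ge> 0" "C \<ge> 0"
        using that sigma_nonneg kappa_nonneg gamma_nonneg delta_nonneg beta_nonneg by (simp_all add: L_def C_def)
      moreover have "f' i s + L * f i s \<ge> -(C * N)"
        if "N \<ge> 0" "\<forall>j\<in>{0, 1, 2, 3}. \<bar>f j s\<bar> \<le> K \<and> f j s \<ge> -N" "i \<in> {0, 1, 2, 3}" for s N i
        using rhs_quasi_positive[where x = "A s" and y = "I s" and z = "R s" and K = K and N = N,
            folded L_def, folded C_def] that
        by (auto simp: f_def f'_def)
      ultimately show ?thesis
        by blast
    qed
    show "f j 0 \<ge> 0" if "j \<in> {0, 1, 2, 3}" for j
      using init that by (auto simp: f_def sair_Omega_def)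
  qed (use that \<open>t \<ge> 0\<close> in auto)
  then show ?thesis
    by (force simp: f_def sair_Omega_def)
qed

lemma weighted_sum_decay:
  assumes sol: "sair_solution \<beta> \<sigma> \<kappa> \<gamma> \<delta> q A I R"
    and init: "(A 0, I 0, R 0) \<in> sair_Omega" and "t \<ge> 0" and "\<mu> \<ge> 0"
    and Lyapunov: "\<And>x y z. x \<ge> 0 \<Longrightarrow> y \<ge> 0 \<Longrightarrow> z \<ge> 0 \<Longrightarrow>
      v1 * rhs_A x y z + v2 * rhs_I x y z + v3 * rhs_R x y z \<le> - \<mu> * (v1 * x + v2 * y + v3 * z)"
  shows "v1 * A t + v2 * I t + v3 * R t \<le> exp (- \<mu> * t) * (v1 * A 0 + v2 * I 0 + v3 * R 0)"
proof -
  define W where "W s = - (v1 * A s + v2 * I s + v3 * R s)" for s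
  define W' where "W' s = - (v1 * rhs_A (A s) (I s) (R s) + v2 * rhs_I (A s) (I s) (R s)
    + v3 * rhs_R (A s) (I s) (R s))" for s
  \<comment> \<open>Gronwall's inequality, as the integrating-factor bound with B = 0 for the negated sum\<close>
  have "W t \<ge> exp (- \<mu> * (t - 0)) * W 0 - 0 * (t - 0)"
  proof (rule integrating_factor_lower_bound)
    fix s assume "s \<in> {0..t}"
    then have "s \<ge> 0" by simp
    show "(W has_real_derivative W' s) (at s within {0..t})"
      unfolding W_def W'_def
      using solution_has_derivatives[OF sol \<open>s \<ge> 0\<close>]
      by (auto intro!: derivative_eq_intros intro: has_field_derivative_subset)
    have "(A s, I s, R s) \<in> sair_Omega"
      by (rule solution_stays_in_Omega[OF sol init \<open>s \<ge> 0\<close>])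
    then show "W' s + \<mu> * W s \<ge> - 0"
      using Lyapunov[of "A s" "I s" "R s"] by (auto simp: W_def W'_def sair_Omega_def algebra_simps)
  qed (use \<open>t \<ge> 0\<close> \<open>\<mu> \<ge> 0\<close> in auto)
  then show ?thesis
    by (simp add: W_def algebra_simps)
qed

end

locale sair_subthreshold = sair +
  assumes gamma_pos: "\<gamma> > 0" and kappa_sigma_pos: "\<kappa> + \<sigma> > 0" and delta_pos: "\<delta> > 0"
    and R0_less_1: "sair_R0 \<beta> \<sigma> \<kappa> \<gamma> q < 1"
begin

lemma linear_Lyapunov_function:
  obtains v1 v2 v3 \<mu> where "v1 > 0" "v2 > 0" "v3 > 0" "\<mu> > 0"
    "\<And>x y z. x \<ge> 0 \<Longrightarrow> y \<ge> 0 \<Longrightarrow> z \<ge> 0 \<Longrightarrow>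
      v1 * rhs_A x y z + v2 * rhs_I x y z + v3 * rhs_R x y z \<le> - \<mu> * (v1 * x + v2 * y + v3 * z)"
proof -
  define a b c d where "a = q * \<beta> - \<sigma> - \<kappa>" and "b = q * \<beta>"
    and "c = (1 - q) * \<beta> + \<sigma>" and "d = (1 - q) * \<beta> - \<gamma>"
  have "\<beta> / (\<kappa> + \<gamma> + \<sigma>) < 1"
    and "\<beta> * (q * \<gamma> + (1 - q) * \<kappa> + \<sigma>) / (\<gamma> * (\<kappa> + \<sigma>)) < 1"
    using R0_less_1 by (simp_all add: sair_R0_def)
  then have "\<beta> < \<kappa> + \<gamma> + \<sigma>" and "\<beta> * (q * \<gamma> + (1 - q) * \<kappa> + \<sigma>) < \<gamma> * (\<kappa> + \<sigma>)"
    using gamma_pos kappa_sigma_pos by (simp_all add: divide_less_eq add_pos_nonneg)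
  then have trace: "a + d < 0" and det: "a * d - b * c > 0"
    by (simp_all add: a_def b_def c_def d_def algebra_simps)
  have "b \<ge> 0" "c \<ge> 0"
    using beta_nonneg sigma_nonneg q_nonneg q_le_1 by (simp_all add: b_def c_def)
  have "d < 0"
  proof (rule ccontr)
    assume "\<not> d < 0"
    with trace have "a * d \<le> 0"
      by (simp add: mult_nonpos_nonneg)
    with det \<open>b \<ge> 0\<close> \<open>c \<ge> 0\<close> show False
      by (smt (verit) mult_nonneg_nonneg)
  qed
  obtain v1 v2 v3 \<mu> where pos: "v1 > 0" "v2 > 0" "v3 > 0" "\<mu> > 0"
    and rows: "v1 * a + v2 * c + v3 * \<kappa> \<le> - \<mu> * v1" "v1 * b + v2 * d + v3 * \<gamma> \<le> - \<mu> * v2"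
      "v3 * \<delta> \<ge> \<mu> * v3"
    using Metzler_Hurwitz_block_triangular_Lyapunov_weights[OF \<open>b \<ge> 0\<close> \<open>c \<ge> 0\<close> \<open>d < 0\<close> det
        kappa_nonneg gamma_nonneg delta_pos] by blast
  show ?thesis
  proof (rule that[OF pos])
    fix x y z :: real
    assume "x \<ge> 0" "y \<ge> 0" "z \<ge> 0"
    have "v1 * rhs_A x y z + v2 * rhs_I x y z + v3 * rhs_R x y z
        = (v1 * a + v2 * c + v3 * \<kappa>) * x + (v1 * b + v2 * d + v3 * \<gamma>) * y - (v3 * \<delta>) * z
          - (v1 * q + v2 * (1 - q)) * \<beta> * ((x + y + z) * (x + y))"
      by (simp add: rhs_A_def rhs_I_def rhs_R_def a_def b_def c_def d_def algebra_simps)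
    also have "\<dots> \<le> (- \<mu> * v1) * x + (- \<mu> * v2) * y - (\<mu> * v3) * z"
    proof -
      have "(v1 * q + v2 * (1 - q)) * \<beta> * ((x + y + z) * (x + y)) \<ge> 0"
        using pos \<open>x \<ge> 0\<close> \<open>y \<ge> 0\<close> \<open>z \<ge> 0\<close> beta_nonneg q_nonneg q_le_1 by simp
      moreover have "(v1 * a + v2 * c + v3 * \<kappa>) * x \<le> (- \<mu> * v1) * x"
        "(v1 * b + v2 * d + v3 * \<gamma>) * y \<le> (- \<mu> * v2) * y" "(\<mu> * v3) * z \<le> (v3 * \<delta>) * z"
        using rows \<open>x \<ge> 0\<close> \<open>y \<ge> 0\<close> \<open>z \<ge> 0\<close> by (metis mult_right_mono)+
      ultimately show ?thesis
        by linarith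
    qed
    also have "\<dots> = - \<mu> * (v1 * x + v2 * y + v3 * z)"
      by (simp add: algebra_simps)
    finally show "v1 * rhs_A x y z + v2 * rhs_I x y z + v3 * rhs_R x y z \<le> - \<mu> * (v1 * x + v2 * y + v3 * z)" .
  qed
qed

lemma exponential_decay:
  obtains c \<mu> where "c > 0" "\<mu> > 0"
    "\<And>A I R t. sair_solution \<beta> \<sigma> \<kappa> \<gamma> \<delta> q A I R \<Longrightarrow> (A 0, I 0, R 0) \<in> sair_Omega \<Longrightarrow> t \<ge> 0 \<Longrightarrow>
      norm (A t, I t, R t) \<le> c * norm (A 0, I 0, R 0) * exp (- \<mu> * t)"
proof -
  obtain v1 v2 v3 \<mu> where pos: "v1 > 0" "v2 > 0" "v3 > 0" "\<mu> > 0"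
    and Lyapunov: "\<And>x y z. x \<ge> 0 \<Longrightarrow> y \<ge> 0 \<Longrightarrow> z \<ge> 0 \<Longrightarrow>
      v1 * rhs_A x y z + v2 * rhs_I x y z + v3 * rhs_R x y z \<le> - \<mu> * (v1 * x + v2 * y + v3 * z)"
    using linear_Lyapunov_function by blast
  define m where "m = min v1 (min v2 v3)"
  define V where "V = v1 + v2 + v3"
  have "m > 0" "V > 0"
    using pos by (simp_all add: m_def V_def)
  show ?thesis
  proof (rule that[of "V / m" \<mu>])
    show "V / m > 0" "\<mu> > 0"
      using \<open>m > 0\<close> \<open>V > 0\<close> pos by simp_all
    fix A I R and t :: real
    assume sol: "sair_solution \<beta> \<sigma> \<kappa> \<gamma> \<delta> q A I R" and init: "(A 0, I 0, R 0) \<in> sair_Omega" and "t \<ge> 0"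
    have "A t \<ge> 0" "I t \<ge> 0" "R t \<ge> 0"
      using solution_stays_in_Omega[OF sol init \<open>t \<ge> 0\<close>] by (simp_all add: sair_Omega_def)
    have "A 0 \<ge> 0" "I 0 \<ge> 0" "R 0 \<ge> 0"
      using init by (simp_all add: sair_Omega_def)
    let ?n0 = "norm (A 0, I 0, R 0)"
    have "m * norm (A t, I t, R t) \<le> m * (A t + I t + R t)"
      using norm_triple_le_sum[of "A t" "I t" "R t"] \<open>m > 0\<close> \<open>A t \<ge> 0\<close> \<open>I t \<ge> 0\<close> \<open>R t \<ge> 0\<close> by simp
    also have "\<dots> \<le> v1 * A t + v2 * I t + v3 * R t"
      using \<open>A t \<ge> 0\<close> \<open>I t \<ge> 0\<close> \<open>R t \<ge> 0\<close>
      by (simp add: m_def distrib_left add_mono mult_right_mono)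
    also have "\<dots> \<le> exp (- \<mu> * t) * (v1 * A 0 + v2 * I 0 + v3 * R 0)"
      using weighted_sum_decay[OF sol init \<open>t \<ge> 0\<close> _ Lyapunov] pos by simp
    also have "\<dots> \<le> exp (- \<mu> * t) * (V * ?n0)"
    proof -
      have "v1 * A 0 + v2 * I 0 + v3 * R 0 \<le> v1 * ?n0 + v2 * ?n0 + v3 * ?n0"
        using abs_le_norm_triple[where x = "A 0" and y = "I 0" and z = "R 0"] pos \<open>A 0 \<ge> 0\<close> \<open>I 0 \<ge> 0\<close> \<open>R 0 \<ge> 0\<close>
        by (intro add_mono mult_left_mono) auto
      then show ?thesis
        by (simp add: V_def distrib_right)
    qed
    finally show "norm (A t, I t, R t) \<le> V / m * ?n0 * exp (- \<mu> * t)"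
      using \<open>m > 0\<close> by (simp add: field_simps)
  qed
qed

end

theorem proposition1:
  fixes \<beta> \<sigma> \<kappa> \<gamma> \<delta> q :: real
  assumes "\<beta> \<ge> 0" and "\<sigma> \<ge> 0" and "\<kappa> \<ge> 0" and "\<gamma> > 0" and "\<kappa> + \<sigma> > 0" and "\<delta> > 0"
    and "0 \<le> q" and "q \<le> 1"
    and "sair_R0 \<beta> \<sigma> \<kappa> \<gamma> q < 1"
  shows
    \<comment> \<open>Lyapunov stability of the disease-free equilibrium (A,I,R) = (0,0,0), i.e. S = 1\<close>
    "(\<forall>\<epsilon>>0. \<exists>d>0. \<forall>A I R. sair_solution \<beta> \<sigma> \<kappa> \<gamma> \<delta> q A I R \<and> (A 0, I 0, R 0) \<in> sair_Omega
         \<and> norm (A 0, I 0, R 0) < d \<longrightarrow> (\<forall>t\<ge>0. norm (A t, I t, R t) < \<epsilon>))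
     \<and>
    \<comment> \<open>global attractivity on the state space\<close>
     (\<forall>A I R. sair_solution \<beta> \<sigma> \<kappa> \<gamma> \<delta> q A I R \<and> (A 0, I 0, R 0) \<in> sair_Omega \<longrightarrow>
         ((\<lambda>t. (A t, I t, R t)) \<longlongrightarrow> (0, 0, 0)) at_top)"
proof -
  interpret sair_subthreshold \<beta> \<sigma> \<kappa> \<gamma> \<delta> q
    using assms by unfold_locales auto
  obtain c \<mu> where "c > 0" "\<mu> > 0" and decay: "\<And>A I R t. sair_solution \<beta> \<sigma> \<kappa> \<gamma> \<delta> q A I R \<Longrightarrow>
      (A 0, I 0, R 0) \<in> sair_Omega \<Longrightarrow> t \<ge> 0 \<Longrightarrow> norm (A t, I t, R t) \<le> c * norm (A 0, I 0, R 0) * exp (- \<mu> * t)"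
    using exponential_decay by blast
  have uniform_bound: "norm (A t, I t, R t) \<le> c * norm (A 0, I 0, R 0)"
    if "sair_solution \<beta> \<sigma> \<kappa> \<gamma> \<delta> q A I R" "(A 0, I 0, R 0) \<in> sair_Omega" "t \<ge> 0" for A I R t
  proof -
    have "exp (- \<mu> * t) \<le> 1"
      using \<open>\<mu> > 0\<close> \<open>t \<ge> 0\<close> by simp
    then have "c * norm (A 0, I 0, R 0) * exp (- \<mu> * t) \<le> c * norm (A 0, I 0, R 0)"
      using \<open>c > 0\<close> by (simp add: mult_left_le)
    with decay[OF that] show ?thesis
      by linarith
  qed
  show ?thesis
  proof (intro conjI allI impI)
    fix \<epsilon> :: real
    assume "\<epsilon> > 0"
    with \<open>c > 0\<close> uniform_bound show "\<exists>d>0. \<forall>A I R. sair_solution \<beta> \<sigma> \<kappa> \<gamma> \<delta> q A I R \<and> (A 0, I 0, R 0) \<in> sair_Omega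
        \<and> norm (A 0, I 0, R 0) < d \<longrightarrow> (\<forall>t\<ge>0. norm (A t, I t, R t) < \<epsilon>)"
      by (intro exI[of _ "\<epsilon> / c"]) (fastforce simp: field_simps)
  next
    fix A I R
    assume "sair_solution \<beta> \<sigma> \<kappa> \<gamma> \<delta> q A I R \<and> (A 0, I 0, R 0) \<in> sair_Omega"
    with decay have "((\<lambda>t. (A t, I t, R t)) \<longlongrightarrow> 0) at_top"
      by (intro tendsto_zero_if_exponential_bound[OF \<open>\<mu> > 0\<close>]) blast
    then show "((\<lambda>t. (A t, I t, R t)) \<longlongrightarrow> (0, 0, 0)) at_top"
      by (simp add: zero_prod_def[symmetric])
  qed
qed

end
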